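(* Suppose $F\in\mathcal{A}\setminus\{\delta_0\}$ is not aperiodic. Then there exist $m\in\{2,3,4,\dots\}$ and an aperiodic probability $\widetilde{F}\in\mathcal{A}$ such that $\mathrm{supp}(F)\subseteq\{0,m,2m,\dots\}$ and $F(km)=\widetilde{F}(k)$ for all $k\in\mathbb{Z}^+$.
   Context: $\mathbb{P}(\mathbb{Z}^+)$ is the set of functions $F:\mathbb{Z}\to[0,1]$ with $\sum_kF(k)=1$ and $F(k)=0$ for $k<0$; $\delta_m$ is the point mass at $m$; $F^{(n)}$ is the $n$-th convolution power. $\mathcal{A}=\{F\in\mathbb{P}(\mathbb{Z}^+):\sup_{n\in\mathbb{N}}n\sum_k|F^{(n)}(k)-F^{(n+1)}(k)|<\infty\}$. $F$ is adapted if $\mathrm{supp}(F)=\{k:F(k)\ne0\}$ generates the additive group $\mathbb{Z}$, and aperiodic if every translate $\delta_m*F$, $m\in\mathbb{Z}$, is adapted. *)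

theory Defs
  imports "HOL-Analysis.Analysis"
begin

definition probZp :: "(int \<Rightarrow> real) set" where
  "probZp = {F. (\<forall>k. 0 \<le> F k \<and> F k \<le> 1) \<and> (F has_sum 1) UNIV \<and> (\<forall>k<0. F k = 0)}"

definition delta :: "int \<Rightarrow> int \<Rightarrow> real" where
  "delta m = (\<lambda>k. if k = m then 1 else 0)"

definition conv :: "(int \<Rightarrow> real) \<Rightarrow> (int \<Rightarrow> real) \<Rightarrow> int \<Rightarrow> real" where
  "conv F G = (\<lambda>k. \<Sum>\<^sub>\<infinity>j. F j * G (k - j))"

fun convpow :: "(int \<Rightarrow> real) \<Rightarrow> nat \<Rightarrow> int \<Rightarrow> real" where
  "convpow F 0 = delta 0"
| "convpow F (Suc n) = conv F (convpow F n)"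

definition classA :: "(int \<Rightarrow> real) set" where
  "classA = {F \<in> probZp. \<exists>C. \<forall>n::nat. n \<ge> 1 \<longrightarrow>
      real n * (\<Sum>\<^sub>\<infinity>k. \<bar>convpow F n k - convpow F (Suc n) k\<bar>) \<le> C}"

definition supp :: "(int \<Rightarrow> real) \<Rightarrow> int set" where
  "supp F = {k. F k \<noteq> 0}"

definition int_subgroup :: "int set \<Rightarrow> bool" where
  "int_subgroup H = (0 \<in> H \<and> (\<forall>x\<in>H. \<forall>y\<in>H. x - y \<in> H))"

definition generates_Z :: "int set \<Rightarrow> bool" where
  "generates_Z S = (\<forall>H. int_subgroup H \<and> S \<subseteq> H \<longrightarrow> H = UNIV)"

definition adapted :: "(int \<Rightarrow> real) \<Rightarrow> bool" where
  "adapted F = generates_Z (supp F)"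

definition aperiodic :: "(int \<Rightarrow> real) \<Rightarrow> bool" where
  "aperiodic F = (\<forall>m::int. adapted (conv (delta m) F))"

end

theory Submission
  imports Defs
begin

text \<open>If the support of \<open>F\<close> lies in a coset \<open>r + d\<int>\<close>, then the convolution powers
  \<open>F\<^sup>n\<close> and \<open>F\<^bsup>n+1\<^esup>\<close> live on the cosets \<open>n r + d\<int>\<close> and \<open>(n + 1) r + d\<int>\<close>. Unless \<open>d\<close>
  divides \<open>r\<close> these are disjoint, so the two powers stay at \<open>\<ell>\<^sub>1\<close>-distance \<open>2\<close>, which is
  incompatible with \<open>F \<in> \<A>\<close>. Hence for \<open>F \<in> \<A>\<close> no translate of \<open>F\<close> has a coarser period
  than \<open>F\<close> itself, i.e. \<open>F\<close> is aperiodic iff \<open>gcd (supp F) = 1\<close>. Otherwise \<open>m = gcd (supp F) \<ge> 2\<close>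
  (as \<open>F \<noteq> \<delta>\<^sub>0\<close>), and the dilation \<open>k \<mapsto> F (k m)\<close> has support of gcd \<open>1\<close> and
  convolution powers equal to the dilated powers of \<open>F\<close>, so it is an aperiodic member of \<open>\<A>\<close>.\<close>

definition prob_fun :: "(int \<Rightarrow> real) \<Rightarrow> bool" where
  "prob_fun F \<longleftrightarrow> (\<forall>k. 0 \<le> F k) \<and> (F has_sum 1) UNIV"

lemma probZp_imp_prob_fun: "F \<in> probZp \<Longrightarrow> prob_fun F"
  by (simp add: probZp_def prob_fun_def)

lemma prob_fun_le_1:
  assumes "prob_fun F"
  shows "F k \<le> 1"
proof -
  have "(F has_sum F k) {k}"
    using has_sum_finite[of "{k}" F] by simp
  moreover have "(F has_sum 1) UNIV"
    using assms prob_fun_def by blast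
  ultimately show ?thesis
    by (rule has_sum_mono_neutral) (use assms in \<open>auto simp: prob_fun_def\<close>)
qed

lemma prob_fun_delta: "prob_fun (delta a)"
proof -
  have "(delta a has_sum 1) {a}"
    using has_sum_finite[of "{a}" "delta a"] by (simp add: delta_def)
  moreover have "(delta a has_sum 1) UNIV \<longleftrightarrow> (delta a has_sum 1) {a}"
    by (rule has_sum_cong_neutral) (auto simp: delta_def)
  ultimately show ?thesis
    by (simp add: prob_fun_def delta_def)
qed

lemma prob_fun_eq_delta:
  assumes "prob_fun F" and "supp F \<subseteq> {a}"
  shows "F = delta a"
proof -
  have "(F has_sum 1) UNIV \<longleftrightarrow> (F has_sum 1) {a}"
    by (rule has_sum_cong_neutral) (use assms(2) in \<open>auto simp: supp_def\<close>)
  with assms(1) have "(F has_sum 1) {a}"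
    by (simp add: prob_fun_def)
  moreover have "(F has_sum F a) {a}"
    using has_sum_finite[of "{a}" F] by simp
  ultimately have "F a = 1"
    using has_sum_unique by blast
  with assms(2) show ?thesis
    by (auto simp: delta_def supp_def fun_eq_iff)
qed

lemma has_sum_translate:
  "((\<lambda>k. G (k - j)) has_sum s) UNIV \<longleftrightarrow> (G has_sum s) (UNIV :: int set)"
  by (rule has_sum_reindex_bij_witness[of UNIV "\<lambda>k. k + j" "\<lambda>k. k - j"]) auto

lemma prob_fun_conv:
  assumes F: "prob_fun F" and G: "prob_fun G"
  shows "prob_fun (conv F G)"
proof -
  define h where "h = (\<lambda>(j, k). F j * G (k - j))"
  have F_sum: "(F has_sum 1) UNIV"
    using F prob_fun_def by blast
  have rows: "((\<lambda>k. h (j, k)) has_sum F j) UNIV" for j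
  proof -
    have "((\<lambda>k. G (k - j)) has_sum 1) UNIV"
      using G by (simp add: has_sum_translate prob_fun_def)
    from has_sum_cmult_right[OF this, of "F j"] show ?thesis
      by (simp add: h_def)
  qed
  have "h summable_on UNIV \<times> UNIV"
    by (rule summable_on_SigmaI[OF rows has_sum_imp_summable[OF F_sum]])
       (use F G in \<open>auto simp: h_def prob_fun_def\<close>)
  then have "(h has_sum 1) (UNIV \<times> UNIV)"
    using has_sum_SigmaI[OF rows F_sum] by simp
  then have h_swap: "((\<lambda>(k, j). h (j, k)) has_sum 1) (UNIV \<times> UNIV)"
    using has_sum_swap[where f = h and A = UNIV and B = UNIV] by simp
  have columns: "((\<lambda>j. h (j, k)) has_sum conv F G k) UNIV" for k
  proof -
    have "(\<lambda>j. norm (F j * G (k - j))) summable_on UNIV"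
    proof (rule Infinite_Sum.abs_summable_on_comparison_test'[OF has_sum_imp_summable[OF F_sum]])
      fix j
      show "norm (F j * G (k - j)) \<le> F j"
        using F G prob_fun_le_1[OF G, of "k - j"]
        by (simp add: prob_fun_def abs_mult mult_left_le)
    qed
    then have "(\<lambda>j. F j * G (k - j)) summable_on UNIV"
      using F G by (simp add: prob_fun_def abs_mult)
    then show ?thesis
      by (simp add: h_def conv_def)
  qed
  have "(conv F G has_sum 1) UNIV"
    using has_sum_Sigma'[OF h_swap] columns by simp
  moreover have "0 \<le> conv F G k" for k
    unfolding conv_def using F G by (auto simp: prob_fun_def intro!: infsum_nonneg)
  ultimately show ?thesis
    by (simp add: prob_fun_def)
qed

lemma prob_fun_convpow: "prob_fun F \<Longrightarrow> prob_fun (convpow F n)"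
  by (induction n) (auto simp: prob_fun_delta prob_fun_conv)

lemma conv_delta_left: "conv (delta a) G k = G (k - a)"
proof -
  have "conv (delta a) G k = (\<Sum>\<^sub>\<infinity>j\<in>{a}. delta a j * G (k - j))"
    unfolding conv_def by (rule infsum_cong_neutral) (auto simp: delta_def)
  then show ?thesis
    by (simp add: delta_def)
qed

lemma supp_conv_delta_left: "supp (conv (delta a) G) = (+) a ` supp G"
  by (force simp: supp_def conv_delta_left)

lemma conv_neq_0_imp:
  assumes "conv F G k \<noteq> 0"
  obtains j where "F j \<noteq> 0" and "G (k - j) \<noteq> 0"
proof -
  have "\<exists>j. F j * G (k - j) \<noteq> 0"
  proof (rule ccontr)
    assume "\<nexists>j. F j * G (k - j) \<noteq> 0"
    then have "conv F G k = 0"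
      by (simp add: conv_def infsum_0)
    with assms show False ..
  qed
  with that show thesis
    by auto
qed

lemma convpow_neq_0_imp_dvd:
  assumes "\<And>k. F k \<noteq> 0 \<Longrightarrow> d dvd k - r"
  shows "convpow F n k \<noteq> 0 \<Longrightarrow> d dvd k - int n * r"
proof (induction n arbitrary: k)
  case 0
  then show ?case
    by (simp add: delta_def split: if_splits)
next
  case (Suc n)
  then obtain j where "F j \<noteq> 0" and "convpow F n (k - j) \<noteq> 0"
    by (auto elim: conv_neq_0_imp)
  then have "d dvd (j - r) + (k - j - int n * r)"
    using assms Suc.IH by (blast intro: dvd_add)
  then show ?case
    by (simp add: algebra_simps)
qed

lemma infsum_abs_diff_ge_1_if_disjoint:
  assumes "prob_fun a" and "prob_fun b" and disjoint: "\<And>k. b k \<noteq> 0 \<Longrightarrow> a k = 0"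
  shows "1 \<le> (\<Sum>\<^sub>\<infinity>k. \<bar>a k - b k\<bar>)"
proof -
  have a: "(a has_sum 1) UNIV" and b: "(b has_sum 1) UNIV"
    using assms by (simp_all add: prob_fun_def)
  have "((\<lambda>k. a k + - b k) has_sum 1 + - 1) UNIV"
    by (intro has_sum_add[OF a] has_sum_uminusI[OF b])
  then have "(\<lambda>k. \<bar>a k - b k\<bar>) summable_on UNIV"
    using summable_on_iff_abs_summable_on_real has_sum_imp_summable by force
  moreover have "a k \<le> \<bar>a k - b k\<bar>" for k
    using disjoint[of k] by (cases "b k = 0") auto
  ultimately have "infsum a UNIV \<le> (\<Sum>\<^sub>\<infinity>k. \<bar>a k - b k\<bar>)"
    by (intro infsum_mono has_sum_imp_summable[OF a])
  with a show ?thesis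
    by (simp add: infsumI)
qed

lemma classA_ex_convpow_dist_lt_1:
  assumes "F \<in> classA"
  obtains n where "(\<Sum>\<^sub>\<infinity>k. \<bar>convpow F n k - convpow F (Suc n) k\<bar>) < 1"
proof -
  obtain C where C: "\<And>n::nat. n \<ge> 1 \<Longrightarrow>
      real n * (\<Sum>\<^sub>\<infinity>k. \<bar>convpow F n k - convpow F (Suc n) k\<bar>) \<le> C"
    using assms unfolding classA_def by blast
  define n where "n = nat \<lceil>C\<rceil> + 1"
  define D where "D = (\<Sum>\<^sub>\<infinity>k. \<bar>convpow F n k - convpow F (Suc n) k\<bar>)"
  have "C < real n"
    unfolding n_def by linarith
  moreover have "real n * D \<le> C"
    using C[of n] unfolding D_def n_def by simp
  ultimately have "real n * D < real n * 1"
    by simp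
  then have "D < 1"
    by (simp add: n_def)
  then show ?thesis
    using that D_def by blast
qed

lemma classA_coset_offset_dvd:
  assumes "F \<in> classA" and coset: "\<And>k. F k \<noteq> 0 \<Longrightarrow> d dvd k - r"
  shows "d dvd r"
proof (rule ccontr)
  assume "\<not> d dvd r"
  have F: "prob_fun F"
    using assms(1) by (simp add: classA_def probZp_imp_prob_fun)
  have "1 \<le> (\<Sum>\<^sub>\<infinity>k. \<bar>convpow F n k - convpow F (Suc n) k\<bar>)" for n
  proof (rule infsum_abs_diff_ge_1_if_disjoint)
    fix k
    assume "convpow F (Suc n) k \<noteq> 0"
    show "convpow F n k = 0"
    proof (rule ccontr)
      assume "convpow F n k \<noteq> 0"
      with \<open>convpow F (Suc n) k \<noteq> 0\<close>
      have "d dvd (k - int n * r) - (k - int (Suc n) * r)"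
        by (intro dvd_diff convpow_neq_0_imp_dvd[OF coset])
      with \<open>\<not> d dvd r\<close> show False
        by (simp add: algebra_simps)
    qed
  qed (use F prob_fun_convpow in blast)+
  with classA_ex_convpow_dist_lt_1[OF assms(1)] show False
    by (meson not_le)
qed

lemma int_subgroup_multiples: "int_subgroup {x. d dvd x}"
  by (simp add: int_subgroup_def)

lemma int_subgroup_mult_closed:
  assumes H: "int_subgroup H" and "x \<in> H"
  shows "k * x \<in> H"
proof -
  have zero: "0 \<in> H" and diff: "\<And>a b. a \<in> H \<Longrightarrow> b \<in> H \<Longrightarrow> a - b \<in> H"
    using H by (auto simp: int_subgroup_def)
  have minus: "- a \<in> H" if "a \<in> H" for a
    using diff[OF zero that] by simp
  have nat_mult: "int n * x \<in> H" for n
  proof (induction n)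
    case 0
    then show ?case
      using zero by simp
  next
    case (Suc n)
    then have "int n * x - - x \<in> H"
      using diff minus \<open>x \<in> H\<close> by blast
    then show ?case
      by (simp add: algebra_simps)
  qed
  show ?thesis
  proof (cases "k \<ge> 0")
    case True
    then show ?thesis
      using nat_mult[of "nat k"] by simp
  next
    case False
    then show ?thesis
      using minus[OF nat_mult[of "nat (- k)"]] by simp
  qed
qed

lemma int_subgroup_eq_multiples:
  assumes H: "int_subgroup H"
  obtains d where "H = {x. d dvd x}"
proof (cases "H \<subseteq> {0}")
  case True
  with H have "H = {x. 0 dvd x}"
    by (auto simp: int_subgroup_def)
  with that show thesis .
next
  case False
  then obtain x where "x \<in> H" "x \<noteq> 0"
    by auto
  then have "\<bar>x\<bar> \<in> H"
    using int_subgroup_mult_closed[OF H, of x "sgn x"] by (simp add: abs_sgn mult.commute)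
  then have ex: "\<exists>n::nat. 0 < n \<and> int n \<in> H"
    using \<open>x \<noteq> 0\<close> by (intro exI[of _ "nat \<bar>x\<bar>"]) auto
  define N where "N = (LEAST n::nat. 0 < n \<and> int n \<in> H)"
  have N: "0 < N" "int N \<in> H"
    using LeastI_ex[OF ex] unfolding N_def by auto
  have N_least: "N \<le> n" if "0 < n" and "int n \<in> H" for n
    unfolding N_def by (rule Least_le) (use that in simp)
  have "int N dvd y" if "y \<in> H" for y
  proof -
    have "y - (y div int N) * int N \<in> H"
      using H \<open>y \<in> H\<close> int_subgroup_mult_closed[OF H N(2)] by (simp add: int_subgroup_def)
    then have "int (nat (y mod int N)) \<in> H"
      using N(1) by (simp add: minus_div_mult_eq_mod)
    moreover have "nat (y mod int N) < N"
      using N(1) by (simp add: nat_less_iff)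
    ultimately have "\<not> 0 < nat (y mod int N)"
      using N_least[of "nat (y mod int N)"] by linarith
    moreover have "0 \<le> y mod int N"
      using N(1) by simp
    ultimately show ?thesis
      by (simp add: dvd_eq_mod_eq_0)
  qed
  with int_subgroup_mult_closed[OF H N(2)] have "H = {x. int N dvd x}"
    by (auto simp: mult.commute)
  with that show thesis .
qed

lemma adapted_iff_Gcd_supp: "adapted G \<longleftrightarrow> Gcd (supp G) = 1"
proof
  assume "adapted G"
  then have "{x. Gcd (supp G) dvd x} = UNIV"
    unfolding adapted_def generates_Z_def
    using int_subgroup_multiples by (blast intro: Gcd_dvd)
  then have "Gcd (supp G) dvd 1"
    by blast
  then show "Gcd (supp G) = 1"
    by (metis is_unit_normalize normalize_Gcd)
next
  assume Gcd_1: "Gcd (supp G) = 1"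
  show "adapted G"
    unfolding adapted_def generates_Z_def
  proof (intro allI impI)
    fix H
    assume "int_subgroup H \<and> supp G \<subseteq> H"
    then obtain d where "H = {x. d dvd x}" and "supp G \<subseteq> {x. d dvd x}"
      using int_subgroup_eq_multiples by metis
    then have "d dvd 1"
      using Gcd_greatest[of "supp G" d] Gcd_1 by auto
    with \<open>H = {x. d dvd x}\<close> show "H = UNIV"
      using dvd_trans one_dvd by blast
  qed
qed

lemma aperiodic_iff_Gcd_translates: "aperiodic G \<longleftrightarrow> (\<forall>j. Gcd ((+) j ` supp G) = 1)"
  by (simp add: aperiodic_def adapted_iff_Gcd_supp supp_conv_delta_left)

lemma classA_aperiodic_iff_Gcd_supp:
  assumes "F \<in> classA"
  shows "aperiodic F \<longleftrightarrow> Gcd (supp F) = 1"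
proof
  assume "aperiodic F"
  then show "Gcd (supp F) = 1"
    using aperiodic_iff_Gcd_translates[of F] by (metis image_add_0)
next
  assume Gcd_1: "Gcd (supp F) = 1"
  have "Gcd ((+) j ` supp F) = 1" for j
  proof -
    define d where "d = Gcd ((+) j ` supp F)"
    have coset: "d dvd k - (- j)" if "F k \<noteq> 0" for k
    proof -
      have "j + k \<in> (+) j ` supp F"
        using that by (simp add: supp_def)
      then show ?thesis
        unfolding d_def by (simp add: Gcd_dvd add.commute)
    qed
    have "d dvd - j"
      by (rule classA_coset_offset_dvd[OF assms coset])
    then have "d dvd k" if "k \<in> supp F" for k
      using dvd_add[OF coset[of k] \<open>d dvd - j\<close>] that by (simp add: supp_def)
    then have "d dvd 1"
      using Gcd_greatest[of "supp F" d] Gcd_1 by simp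
    then show ?thesis
      unfolding d_def by (metis is_unit_normalize normalize_Gcd)
  qed
  then show "aperiodic F"
    by (simp add: aperiodic_iff_Gcd_translates)
qed

lemma
  fixes g :: "int \<Rightarrow> 'a::{comm_monoid_add, t2_space}"
  assumes m: "m \<noteq> 0" and vanish: "\<And>x. \<not> m dvd x \<Longrightarrow> g x = 0"
  shows has_sum_dilate: "((\<lambda>i. g (i * m)) has_sum s) UNIV \<longleftrightarrow> (g has_sum s) UNIV"
    and infsum_dilate: "(\<Sum>\<^sub>\<infinity>i. g (i * m)) = infsum g UNIV"
proof -
  have inj: "inj (\<lambda>i::int. i * m)"
    using m by (auto simp: inj_on_def)
  have outside: "g x = 0" if "x \<in> UNIV - range (\<lambda>i. i * m)" for x
    using that vanish by (metis DiffE dvdE mult.commute rangeI)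
  have "((\<lambda>i. g (i * m)) has_sum s) UNIV \<longleftrightarrow> (g has_sum s) (range (\<lambda>i. i * m))"
    using has_sum_reindex[OF inj, of g s] by (simp add: o_def)
  also have "\<dots> \<longleftrightarrow> (g has_sum s) UNIV"
    by (rule has_sum_cong_neutral) (use outside in auto)
  finally show "((\<lambda>i. g (i * m)) has_sum s) UNIV \<longleftrightarrow> (g has_sum s) UNIV" .
  have "(\<Sum>\<^sub>\<infinity>i. g (i * m)) = infsum g (range (\<lambda>i. i * m))"
    using infsum_reindex[OF inj, of g] by (simp add: o_def)
  also have "\<dots> = infsum g UNIV"
    by (rule infsum_cong_neutral) (use outside in auto)
  finally show "(\<Sum>\<^sub>\<infinity>i. g (i * m)) = infsum g UNIV" .
qed

lemma convpow_dilate: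
  assumes m: "m \<noteq> 0" and vanish: "\<And>x. \<not> m dvd x \<Longrightarrow> F x = 0"
  shows "convpow (\<lambda>k. F (k * m)) n k = convpow F n (k * m)"
proof (induction n arbitrary: k)
  case 0
  then show ?case
    using m by (simp add: delta_def)
next
  case (Suc n)
  have "convpow (\<lambda>k. F (k * m)) (Suc n) k = (\<Sum>\<^sub>\<infinity>i. F (i * m) * convpow F n (k * m - i * m))"
    using Suc.IH by (simp add: conv_def algebra_simps)
  also have "\<dots> = (\<Sum>\<^sub>\<infinity>j. F j * convpow F n (k * m - j))"
    by (rule infsum_dilate[OF m, where g = "\<lambda>j. F j * convpow F n (k * m - j)"])
       (simp add: vanish)
  also have "\<dots> = convpow F (Suc n) (k * m)"
    by (simp add: conv_def)
  finally show ?case .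
qed

lemma classA_dilate:
  assumes A: "F \<in> classA" and m: "0 < m" and vanish: "\<And>x. \<not> m dvd x \<Longrightarrow> F x = 0"
  shows "(\<lambda>k. F (k * m)) \<in> classA"
proof -
  define Fm where "Fm = (\<lambda>k. F (k * m))"
  have m0: "m \<noteq> 0"
    using m by simp
  have F: "F \<in> probZp"
    using A by (simp add: classA_def)
  have "(Fm has_sum 1) UNIV"
    using F has_sum_dilate[of m F] m0 vanish by (simp add: Fm_def probZp_def)
  moreover have "Fm k = 0" if "k < 0" for k
    using F m that by (simp add: Fm_def probZp_def mult_neg_pos)
  ultimately have "Fm \<in> probZp"
    using F by (simp add: Fm_def probZp_def)
  moreover have "(\<Sum>\<^sub>\<infinity>k. \<bar>convpow Fm n k - convpow Fm (Suc n) k\<bar>)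
      = (\<Sum>\<^sub>\<infinity>k. \<bar>convpow F n k - convpow F (Suc n) k\<bar>)" for n
  proof -
    have dilate: "convpow Fm l k = convpow F l (k * m)" for l k
      unfolding Fm_def by (rule convpow_dilate) (use m0 vanish in auto)
    have convpow_vanish: "convpow F l x = 0" if "\<not> m dvd x" for l x
      using convpow_neq_0_imp_dvd[of F m 0 l x] vanish that by auto
    show ?thesis
      unfolding dilate
      by (rule infsum_dilate[OF m0, where g = "\<lambda>x. \<bar>convpow F n x - convpow F (Suc n) x\<bar>"])
         (simp add: convpow_vanish del: convpow.simps)
  qed
  ultimately show ?thesis
    using A by (simp add: classA_def Fm_def)
qed

lemma supp_dilate:
  assumes "\<And>x. \<not> m dvd x \<Longrightarrow> F x = 0"
  shows "supp F = (*) m ` supp (\<lambda>k. F (k * m))"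
proof
  show "supp F \<subseteq> (*) m ` supp (\<lambda>k. F (k * m))"
  proof
    fix x
    assume "x \<in> supp F"
    then have "m dvd x"
      using assms by (auto simp: supp_def)
    then obtain k where "x = m * k" ..
    with \<open>x \<in> supp F\<close> show "x \<in> (*) m ` supp (\<lambda>k. F (k * m))"
      by (auto simp: supp_def mult.commute)
  qed
qed (auto simp: supp_def mult.commute)

lemma vanish_off_multiples_Gcd_supp: "\<not> Gcd (supp F) dvd x \<Longrightarrow> F x = 0"
  by (auto simp: supp_def intro: Gcd_dvd)

lemma Gcd_supp_neq_0:
  assumes "prob_fun F" and "F \<noteq> delta 0"
  shows "Gcd (supp F) \<noteq> 0"
  using prob_fun_eq_delta[OF assms(1), of 0] assms(2) by auto

lemma Gcd_supp_dilate_Gcd_supp: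
  assumes "Gcd (supp F) \<noteq> 0"
  shows "Gcd (supp (\<lambda>k. F (k * Gcd (supp F)))) = 1"
proof -
  define m where "m = Gcd (supp F)"
  have "m = Gcd ((*) m ` supp (\<lambda>k. F (k * m)))"
    unfolding m_def
    by (subst supp_dilate[symmetric]) (simp_all add: vanish_off_multiples_Gcd_supp)
  also have "\<dots> = m * Gcd (supp (\<lambda>k. F (k * m)))"
    using Gcd_mult[of m] by (simp add: m_def abs_mult)
  finally show ?thesis
    using assms by (simp add: m_def)
qed

lemma probZp_supp_subset_multiples:
  assumes "F \<in> probZp" and "0 < m" and vanish: "\<And>x. \<not> m dvd x \<Longrightarrow> F x = 0"
  shows "supp F \<subseteq> {k * m | k. k \<ge> 0}"
proof
  fix x
  assume "x \<in> supp F"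
  then have "m dvd x" and "0 \<le> x"
    using assms(1) vanish by (auto simp: supp_def probZp_def not_less[symmetric])
  then obtain k where "x = k * m"
    by (metis dvdE mult.commute)
  with \<open>0 \<le> x\<close> \<open>0 < m\<close> show "x \<in> {k * m | k. k \<ge> 0}"
    by (auto simp: zero_le_mult_iff)
qed

theorem lemma4p3:
  fixes F :: "int \<Rightarrow> real"
  assumes "F \<in> classA" and "F \<noteq> delta 0" and "\<not> aperiodic F"
  shows "\<exists>(m::int) Ft. m \<ge> 2 \<and> Ft \<in> classA \<and> aperiodic Ft \<and>
           supp F \<subseteq> {k * m | k. k \<ge> 0} \<and> (\<forall>k\<ge>0. F (k * m) = Ft k)"
proof -
  define m where "m = Gcd (supp F)"
  have F: "F \<in> probZp"
    using assms(1) by (simp add: classA_def)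
  have "m \<noteq> 0"
    unfolding m_def using Gcd_supp_neq_0 probZp_imp_prob_fun F assms(2) by blast
  moreover have "m \<noteq> 1"
    using classA_aperiodic_iff_Gcd_supp[OF assms(1)] assms(3) by (simp add: m_def)
  moreover have "m \<ge> 0"
    by (simp add: m_def)
  ultimately have "m \<ge> 2"
    by linarith
  have vanish: "F x = 0" if "\<not> m dvd x" for x
    using that unfolding m_def by (rule vanish_off_multiples_Gcd_supp)
  have dilate: "(\<lambda>k. F (k * m)) \<in> classA"
    using \<open>m \<ge> 2\<close> by (intro classA_dilate assms(1) vanish) simp
  moreover have "aperiodic (\<lambda>k. F (k * m))"
    using classA_aperiodic_iff_Gcd_supp[OF dilate] Gcd_supp_dilate_Gcd_supp \<open>m \<noteq> 0\<close>
    by (simp add: m_def)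
  moreover have "supp F \<subseteq> {k * m | k. k \<ge> 0}"
    using \<open>m \<ge> 2\<close> by (intro probZp_supp_subset_multiples F vanish) simp
  ultimately show ?thesis
    using \<open>m \<ge> 2\<close> by (intro exI[of _ m] exI[of _ "\<lambda>k. F (k * m)"]) simp
qed

end
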